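(* Let $A$ be a Type I$_k$ weight matrix with $V_A$ faithful, and consider the Hilbert map $\Pi:V_A\to\mathbb R^\ell\times\mathbb C^{k^2}\times\mathbb C^N$, $\boldsymbol z\mapsto\big((r_i(\boldsymbol z))_i,(p_{i,j}(\boldsymbol z))_{i,j},(q_{\boldsymbol s}(\boldsymbol z))_{\boldsymbol s}\big)$, $N=\binom{\alpha+k-1}{k-1}$ (whose real and imaginary parts form a real Hilbert basis). Then $\Pi(Z_A)$ equals the set of tuples $(r_i,p_{i,j},q_{\boldsymbol s})$ such that $p_{i,j}=\overline{p_{j,i}}$ for all $i,j$, the relations (1)–(6) of Proposition 4.2 hold (with $R_i,P_{i,j},Q_{\boldsymbol s},\overline Q_{\boldsymbol s}$ evaluated at $r_i,p_{i,j},q_{\boldsymbol s},\overline{q_{\boldsymbol s}}$, the latter being the complex conjugate of $q_{\boldsymbol s}$), the moment map relations $-a_ir_i+n_i\sum_{j=1}^kp_{j,j}=0$ hold for $i=1,\dots,\ell$, and the inequalities $r_i\ge0$ ($1\le i\le\ell$) and $p_{j,j}\ge0$ ($1\le j\le k$) hold.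
   Context: Type I$_k$: $A=[D,\boldsymbol n,\dots,\boldsymbol n]\in\mathbb Z^{\ell\times(\ell+k)}$ with $D=\operatorname{diag}(-a_1,\dots,-a_\ell)$, $a_i>0$, $\boldsymbol n=(n_1,\dots,n_\ell)^T$, $n_i>0$; $V_A=\mathbb C^{\ell+k}$ with $\mathbb T^\ell$ acting by $z_j\mapsto\prod_it_i^{a_{ij}}z_j$, faithful = effective; shell $Z_A$ = common zero set of $\tfrac12\sum_ja_{ij}z_j\overline{z_j}$. $\alpha=\operatorname{lcm}(a_i)$, $m_i=n_i\alpha/a_i$. Invariants $r_i=z_i\overline{z_i}$, $p_{i,j}=z_{\ell+i}\overline{z_{\ell+j}}$, $q_{\boldsymbol s}=\prod_{i\le\ell}z_i^{m_i}\prod_{i\le k}z_{\ell+i}^{s_i}$ ($\boldsymbol s\in\mathbb Z^k_{\ge0}$, $\sum s_i=\alpha$). Relations of Proposition 4.2: (1) $P_{g,h}P_{i,j}-P_{g,j}P_{i,h}$; (2) $P_{g,h}Q_{\boldsymbol s}-P_{i,h}Q_{\boldsymbol s'}$ with $s'_g=s_g+1$, $s'_i=s_i-1$, other entries equal; (3) $P_{g,h}\overline Q_{\boldsymbol s}-P_{g,i}\overline Q_{\boldsymbol s'}$ with $s'_h=s_h+1$, $s'_i=s_i-1$, other entries equal; (4) $Q_{\boldsymbol s}Q_{\boldsymbol s'}-Q_{\boldsymbol t}Q_{\boldsymbol t'}$ and (5) $\overline Q_{\boldsymbol s}\overline Q_{\boldsymbol s'}-\overline Q_{\boldsymbol t}\overline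 Q_{\boldsymbol t'}$ whenever $\boldsymbol s+\boldsymbol s'=\boldsymbol t+\boldsymbol t'$; (6) $\prod_iR_i^{m_i}\prod_{j=1}^\alpha P_{g_j,h_j}-Q_{\boldsymbol s}\overline Q_{\boldsymbol s'}$, where $g$ appears $s_g$ times among the $g_j$ and $h$ appears $s'_h$ times among the $h_j$. *)

theory Defs
  imports Complex_Main
begin

text \<open>Conventions: indices are 0-based. Coordinates of V_A = C^(l+k) are z 0, ..., z (l+k-1);
  a vector is a function nat => complex vanishing at indices >= l+k.\<close>

definition typeI_matrix :: "nat \<Rightarrow> (nat \<Rightarrow> nat) \<Rightarrow> (nat \<Rightarrow> nat) \<Rightarrow> nat \<Rightarrow> nat \<Rightarrow> int" where
  "typeI_matrix l a n i j = (if j < l then (if i = j then - int (a i) else 0) else int (n i))"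

definition in_VA :: "nat \<Rightarrow> nat \<Rightarrow> (nat \<Rightarrow> complex) \<Rightarrow> bool" where
  "in_VA l k z \<longleftrightarrow> (\<forall>j\<ge>l+k. z j = 0)"

definition torus_act :: "(nat \<Rightarrow> nat \<Rightarrow> int) \<Rightarrow> nat \<Rightarrow> nat \<Rightarrow> (nat \<Rightarrow> complex) \<Rightarrow> (nat \<Rightarrow> complex) \<Rightarrow> (nat \<Rightarrow> complex)" where
  "torus_act A l k t z = (\<lambda>j. if j < l + k then (\<Prod>i<l. t i powi A i j) * z j else z j)"

definition faithful :: "(nat \<Rightarrow> nat \<Rightarrow> int) \<Rightarrow> nat \<Rightarrow> nat \<Rightarrow> bool" where
  "faithful A l k \<longleftrightarrow>
     (\<forall>t. (\<forall>i<l. norm (t i) = 1) \<longrightarrow> (\<forall>z. in_VA l k z \<longrightarrow> torus_act A l k t z = z) \<longrightarrow> (\<forall>i<l. t i = 1))"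

text \<open>Shell Z_A: common zero set of the homogeneous quadratic moment map components.\<close>
definition shell :: "(nat \<Rightarrow> nat \<Rightarrow> int) \<Rightarrow> nat \<Rightarrow> nat \<Rightarrow> (nat \<Rightarrow> complex) set" where
  "shell A l k = {z. in_VA l k z \<and>
     (\<forall>i<l. (1/2) * (\<Sum>j<l+k. of_int (A i j) * (z j * cnj (z j))) = 0)}"

definition alpha :: "nat \<Rightarrow> (nat \<Rightarrow> nat) \<Rightarrow> nat" where
  "alpha l a = Lcm (a ` {..<l})"

definition mexp :: "nat \<Rightarrow> (nat \<Rightarrow> nat) \<Rightarrow> (nat \<Rightarrow> nat) \<Rightarrow> nat \<Rightarrow> nat" where
  "mexp l a n i = n i * alpha l a div a i"

definition Sset :: "nat \<Rightarrow> nat \<Rightarrow> (nat \<Rightarrow> nat) \<Rightarrow> (nat \<Rightarrow> nat) set" where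
  "Sset l k a = {s. (\<forall>i\<ge>k. s i = 0) \<and> (\<Sum>i<k. s i) = alpha l a}"

definition inv_r :: "nat \<Rightarrow> (nat \<Rightarrow> complex) \<Rightarrow> nat \<Rightarrow> real" where
  "inv_r l z i = (if i < l then Re (z i * cnj (z i)) else 0)"

definition inv_p :: "nat \<Rightarrow> nat \<Rightarrow> (nat \<Rightarrow> complex) \<Rightarrow> nat \<Rightarrow> nat \<Rightarrow> complex" where
  "inv_p l k z i j = (if i < k \<and> j < k then z (l+i) * cnj (z (l+j)) else 0)"

definition inv_q :: "nat \<Rightarrow> nat \<Rightarrow> (nat \<Rightarrow> nat) \<Rightarrow> (nat \<Rightarrow> nat) \<Rightarrow> (nat \<Rightarrow> complex) \<Rightarrow> (nat \<Rightarrow> nat) \<Rightarrow> complex" where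
  "inv_q l k a n z s = (if s \<in> Sset l k a
      then (\<Prod>i<l. z i ^ mexp l a n i) * (\<Prod>i<k. z (l+i) ^ s i) else 0)"

text \<open>Hilbert map Pi (components outside the index ranges are set to 0).\<close>
definition hilbert_map :: "nat \<Rightarrow> nat \<Rightarrow> (nat \<Rightarrow> nat) \<Rightarrow> (nat \<Rightarrow> nat) \<Rightarrow> (nat \<Rightarrow> complex)
     \<Rightarrow> (nat \<Rightarrow> real) \<times> (nat \<Rightarrow> nat \<Rightarrow> complex) \<times> ((nat \<Rightarrow> nat) \<Rightarrow> complex)" where
  "hilbert_map l k a n z = (inv_r l z, inv_p l k z, inv_q l k a n z)"

definition image_desc :: "nat \<Rightarrow> nat \<Rightarrow> (nat \<Rightarrow> nat) \<Rightarrow> (nat \<Rightarrow> nat)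
     \<Rightarrow> ((nat \<Rightarrow> real) \<times> (nat \<Rightarrow> nat \<Rightarrow> complex) \<times> ((nat \<Rightarrow> nat) \<Rightarrow> complex)) set" where
  "image_desc l k a n = {(r, p, q).
     \<comment> \<open>components outside the index ranges vanish\<close>
     (\<forall>i\<ge>l. r i = 0) \<and> (\<forall>i j. \<not> (i < k \<and> j < k) \<longrightarrow> p i j = 0) \<and>
     (\<forall>s. s \<notin> Sset l k a \<longrightarrow> q s = 0) \<and>
     \<comment> \<open>hermitian\<close>
     (\<forall>i<k. \<forall>j<k. p i j = cnj (p j i)) \<and>
     \<comment> \<open>(1)\<close>
     (\<forall>g<k. \<forall>h<k. \<forall>i<k. \<forall>j<k. p g h * p i j - p g j * p i h = 0) \<and>
     \<comment> \<open>(2)\<close>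
     (\<forall>g<k. \<forall>h<k. \<forall>i<k. \<forall>s\<in>Sset l k a. \<forall>s'\<in>Sset l k a.
        s' g = s g + 1 \<and> s' i + 1 = s i \<and> (\<forall>m. m \<noteq> g \<and> m \<noteq> i \<longrightarrow> s' m = s m) \<longrightarrow>
        p g h * q s - p i h * q s' = 0) \<and>
     \<comment> \<open>(3)\<close>
     (\<forall>g<k. \<forall>h<k. \<forall>i<k. \<forall>s\<in>Sset l k a. \<forall>s'\<in>Sset l k a.
        s' h = s h + 1 \<and> s' i + 1 = s i \<and> (\<forall>m. m \<noteq> h \<and> m \<noteq> i \<longrightarrow> s' m = s m) \<longrightarrow>
        p g h * cnj (q s) - p g i * cnj (q s') = 0) \<and>
     \<comment> \<open>(4)\<close>
     (\<forall>s\<in>Sset l k a. \<forall>s'\<in>Sset l k a. \<forall>t\<in>Sset l k a. \<forall>t'\<in>Sset l k a.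
        (\<forall>m. s m + s' m = t m + t' m) \<longrightarrow> q s * q s' - q t * q t' = 0) \<and>
     \<comment> \<open>(5)\<close>
     (\<forall>s\<in>Sset l k a. \<forall>s'\<in>Sset l k a. \<forall>t\<in>Sset l k a. \<forall>t'\<in>Sset l k a.
        (\<forall>m. s m + s' m = t m + t' m) \<longrightarrow> cnj (q s) * cnj (q s') - cnj (q t) * cnj (q t') = 0) \<and>
     \<comment> \<open>(6)\<close>
     (\<forall>gs hs :: nat \<Rightarrow> nat. \<forall>s\<in>Sset l k a. \<forall>s'\<in>Sset l k a.
        (\<forall>j<alpha l a. gs j < k \<and> hs j < k) \<and>
        (\<forall>c<k. card {j. j < alpha l a \<and> gs j = c} = s c) \<and>
        (\<forall>c<k. card {j. j < alpha l a \<and> hs j = c} = s' c) \<longrightarrow>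
        (\<Prod>i<l. complex_of_real (r i) ^ mexp l a n i) * (\<Prod>j<alpha l a. p (gs j) (hs j))
          - q s * cnj (q s') = 0) \<and>
     \<comment> \<open>moment map relations\<close>
     (\<forall>i<l. - of_nat (a i) * complex_of_real (r i) + of_nat (n i) * (\<Sum>j<k. p j j) = 0) \<and>
     \<comment> \<open>inequalities\<close>
     (\<forall>i<l. r i \<ge> 0) \<and> (\<forall>j<k. Im (p j j) = 0 \<and> Re (p j j) \<ge> 0)}"

end

theory Submission
  imports Defs
begin

text \<open>
  Conversely, hermitian
  symmetry, the vanishing 2x2 minors and the nonnegative diagonal make \<open>p\<close> a positive semidefinite
  matrix of rank at most one, so \<open>p i j = w i * cnj (w j)\<close>. Evaluating relation (6) on words that
  realise given exponent vectors shows \<open>q s * cnj (q s') = R * w^s * cnj (w^s')\<close> with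
  \<open>R = (\<Prod>i. r i ^ m i) \<ge> 0\<close>, which forces \<open>q s = c * w^s\<close> for one \<open>c\<close> with \<open>|c|^2 = R\<close>. As
  \<open>m 0 > 0\<close>, the argument of \<open>c\<close> can be put into the first coordinate, giving \<open>z\<close> with
  \<open>|z i|^2 = r i\<close> and \<open>\<Prod>i. z i ^ m i = c\<close>; the moment map relations say that this preimage lies
  on the shell.
\<close>

lemma word_with_counts_exists:
  "\<exists>gs::nat \<Rightarrow> nat. (\<forall>j < (\<Sum>i<K. s i). gs j < K) \<and>
      (\<forall>c<K. card {j. j < (\<Sum>i<K. s i) \<and> gs j = c} = s c)"
proof (induction K)
  case 0
  then show ?case by simp
next
  case (Suc K)
  define N where "N = (\<Sum>i<K. s i)"
  from Suc obtain gs where below: "\<forall>j<N. gs j < K"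
    and counts: "\<forall>c<K. card {j. j < N \<and> gs j = c} = s c"
    unfolding N_def by blast
  define gs' where "gs' = (\<lambda>j. if j < N then gs j else K)"
  have sum_Suc: "(\<Sum>i<Suc K. s i) = N + s K" by (simp add: N_def)
  show ?case
    unfolding sum_Suc
  proof (intro exI conjI allI impI)
    fix j assume "j < N + s K"
    then show "gs' j < Suc K" using below by (auto simp: gs'_def)
  next
    fix c assume c: "c < Suc K"
    show "card {j. j < N + s K \<and> gs' j = c} = s c"
    proof (cases "c = K")
      case True
      then have "{j. j < N + s K \<and> gs' j = c} = {N..<N + s K}"
        using below by (auto simp: gs'_def not_less)
      then show ?thesis using True by simp
    next
      case False
      then have "{j. j < N + s K \<and> gs' j = c} = {j. j < N \<and> gs j = c}"
        by (auto simp: gs'_def)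
      then show ?thesis using counts False c by simp
    qed
  qed
qed

lemma prod_word_eq_prod_power_count:
  fixes f :: "nat \<Rightarrow> 'b::comm_monoid_mult" and N :: nat
  assumes "\<forall>j<N. gs j < K"
  shows "(\<Prod>j<N. f (gs j)) = (\<Prod>c<K. f c ^ card {j. j < N \<and> gs j = c})"
  using assms
proof (induction N)
  case 0
  then show ?case by simp
next
  case (Suc N)
  have card_Suc: "card {j. j < Suc N \<and> gs j = c}
      = card {j. j < N \<and> gs j = c} + (if gs N = c then 1 else 0)" for c
  proof -
    have "{j. j < Suc N \<and> gs j = c}
        = (if gs N = c then insert N {j. j < N \<and> gs j = c} else {j. j < N \<and> gs j = c})"
      by (auto simp: less_Suc_eq)
    then show ?thesis by simp
  qed
  have "(\<Prod>c<K. f c ^ card {j. j < Suc N \<and> gs j = c})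
      = (\<Prod>c<K. f c ^ card {j. j < N \<and> gs j = c} * (if c = gs N then f c else 1))"
    by (rule prod.cong) (auto simp: card_Suc power_add)
  also have "\<dots> = (\<Prod>c<K. f c ^ card {j. j < N \<and> gs j = c}) * f (gs N)"
    using Suc.prems by (simp add: prod.distrib)
  finally show ?case using Suc by simp
qed

definition monomial :: "nat \<Rightarrow> (nat \<Rightarrow> 'a::comm_monoid_mult) \<Rightarrow> (nat \<Rightarrow> nat) \<Rightarrow> 'a" where
  "monomial k w s = (\<Prod>i<k. w i ^ s i)"

lemma monomial_add: "monomial k w (\<lambda>i. s i + t i) = monomial k w s * monomial k w t"
  by (simp add: monomial_def prod.distrib power_add)

lemma monomial_incr:
  assumes "g < k"
  shows "monomial k w (s(g := s g + 1)) = w g * monomial k w s"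
proof -
  have "monomial k w (s(g := s g + 1)) = (\<Prod>i<k. (if i = g then w i else 1) * w i ^ s i)"
    unfolding monomial_def by (rule prod.cong) auto
  also have "\<dots> = w g * monomial k w s"
    using assms by (simp add: monomial_def prod.distrib)
  finally show ?thesis .
qed

lemma monomial_exchange:
  assumes "g < k" "i < k"
    and "s' g = s g + 1" "s' i + 1 = s i" "\<forall>m. m \<noteq> g \<and> m \<noteq> i \<longrightarrow> s' m = s m"
  shows "w g * monomial k w s = w i * monomial k w s'"
proof -
  have "g \<noteq> i" using assms(3,4) by auto
  then have "s(g := s g + 1) = s'(i := s' i + 1)" using assms(3-5) by (auto simp: fun_eq_iff)
  then show ?thesis using monomial_incr[OF assms(1)] monomial_incr[OF assms(2)] by metis
qed

lemma prod_gram_word: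
  fixes w :: "nat \<Rightarrow> complex" and N :: nat
  assumes "\<forall>j<N. gs j < k \<and> hs j < k"
    and "\<forall>c<k. card {j. j < N \<and> gs j = c} = s c"
    and "\<forall>c<k. card {j. j < N \<and> hs j = c} = s' c"
  shows "(\<Prod>j<N. w (gs j) * cnj (w (hs j))) = monomial k w s * cnj (monomial k w s')"
proof -
  have "(\<Prod>j<N. w (gs j)) = monomial k w s"
    using prod_word_eq_prod_power_count[of N gs k w] assms by (simp add: monomial_def)
  moreover have "(\<Prod>j<N. w (hs j)) = monomial k w s'"
    using prod_word_eq_prod_power_count[of N hs k w] assms by (simp add: monomial_def)
  ultimately show ?thesis by (metis prod.distrib cnj_prod)
qed

lemma gram_monomial_eq_if_word_relation:
  fixes w :: "nat \<Rightarrow> complex" and p :: "nat \<Rightarrow> nat \<Rightarrow> complex" and N :: nat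
  assumes pw: "\<forall>i<k. \<forall>j<k. p i j = w i * cnj (w j)"
    and "(\<Sum>i<k. s i) = N" "(\<Sum>i<k. s' i) = N"
    and word_rel: "\<And>gs hs. \<forall>j<N. gs j < k \<and> hs j < k \<Longrightarrow>
        \<forall>c<k. card {j. j < N \<and> gs j = c} = s c \<Longrightarrow> \<forall>c<k. card {j. j < N \<and> hs j = c} = s' c \<Longrightarrow>
        X * (\<Prod>j<N. p (gs j) (hs j)) = Y"
  shows "X * (monomial k w s * cnj (monomial k w s')) = Y"
proof -
  obtain gs where gs: "\<forall>j<N. gs j < k" "\<forall>c<k. card {j. j < N \<and> gs j = c} = s c"
    using word_with_counts_exists[of s k] assms(2) by auto
  obtain hs where hs: "\<forall>j<N. hs j < k" "\<forall>c<k. card {j. j < N \<and> hs j = c} = s' c"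
    using word_with_counts_exists[of s' k] assms(3) by auto
  have "(\<Prod>j<N. p (gs j) (hs j)) = (\<Prod>j<N. w (gs j) * cnj (w (hs j)))"
    using gs(1) hs(1) pw by (intro prod.cong) auto
  also have "\<dots> = monomial k w s * cnj (monomial k w s')"
    using gs hs by (intro prod_gram_word) auto
  finally show ?thesis using word_rel[of gs hs] gs hs by simp
qed

lemma hermitian_rank_one_factor:
  fixes p :: "nat \<Rightarrow> nat \<Rightarrow> complex"
  assumes herm: "\<forall>i<k. \<forall>j<k. p i j = cnj (p j i)"
    and minors: "\<forall>g<k. \<forall>h<k. \<forall>i<k. \<forall>j<k. p g h * p i j - p g j * p i h = 0"
    and diag: "\<forall>j<k. Im (p j j) = 0 \<and> Re (p j j) \<ge> 0"
  shows "\<exists>w. \<forall>i<k. \<forall>j<k. p i j = w i * cnj (w j)"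
proof (cases "\<forall>j<k. p j j = 0")
  case True
  have "p i j = 0" if "i < k" "j < k" for i j
  proof -
    have "p i j * p j i - p i i * p j j = 0" "p j i = cnj (p i j)"
      using minors herm that by blast+
    then show ?thesis using True that by simp
  qed
  then show ?thesis by (intro exI[of _ "\<lambda>_. 0"]) simp
next
  case False
  then obtain j0 where j0: "j0 < k" "p j0 j0 \<noteq> 0" by blast
  define d where "d = sqrt (Re (p j0 j0))"
  have d: "p j0 j0 = complex_of_real d * complex_of_real d"
    using diag j0 by (simp add: d_def complex_eq_iff flip: of_real_mult)
  show ?thesis
  proof (intro exI[of _ "\<lambda>i. p i j0 / d"] allI impI)
    fix i j assume ij: "i < k" "j < k"
    have minor: "p i j0 * p j0 j = p i j * p j0 j0"
      using minors ij j0 by (metis eq_iff_diff_eq_0)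
    have "p j0 j = cnj (p j j0)" using herm ij j0 by blast
    then have "p i j0 / d * cnj (p j j0 / d) = p i j0 * p j0 j / p j0 j0"
      by (simp add: d)
    also have "\<dots> = p i j" using minor j0(2) by simp
    finally show "p i j = p i j0 / d * cnj (p j j0 / d)" ..
  qed
qed

lemma exists_scalar_of_gram_eq:
  fixes W q :: "'s \<Rightarrow> complex" and X :: real
  assumes gram: "\<forall>s\<in>S. \<forall>s'\<in>S. X * (W s * cnj (W s')) = q s * cnj (q s')"
    and "X \<ge> 0"
  shows "\<exists>c. c * cnj c = X \<and> (\<forall>s\<in>S. q s = c * W s)"
proof (cases "\<exists>s0\<in>S. W s0 \<noteq> 0")
  case False
  have "q s = 0" if "s \<in> S" for s
    using gram that False by (metis complex_cnj_zero_iff mult_zero_right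
        no_zero_divisors)
  moreover have "sqrt X * cnj (sqrt X) = X" using \<open>X \<ge> 0\<close> by (simp flip: of_real_mult)
  ultimately show ?thesis using False by (metis mult_zero_right)
next
  case True
  then obtain s0 where s0: "s0 \<in> S" "W s0 \<noteq> 0" by blast
  define c where "c = q s0 / W s0"
  have q0: "X * (W s0 * cnj (W s0)) = q s0 * cnj (q s0)" using gram s0 by blast
  have "c * cnj c = X" using q0 s0(2) by (simp add: c_def field_simps)
  moreover have "q s = c * W s" if s: "s \<in> S" for s
  proof (cases "q s0 = 0")
    case True
    then have "X = 0" using q0 s0(2) by simp
    then show ?thesis using gram s True by (auto simp: c_def)
  next
    case False
    have "c * W s * cnj (q s0) = X * (W s * cnj (W s0))"
      using q0 s0(2) by (simp add: c_def field_simps)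
    also have "\<dots> = q s * cnj (q s0)" using gram s s0 by blast
    finally show ?thesis using False by simp
  qed
  ultimately show ?thesis by blast
qed

lemma exists_prescribed_moduli_prod_power:
  fixes r :: "nat \<Rightarrow> real" and m :: "nat \<Rightarrow> nat" and c :: complex
  assumes r: "\<forall>i<l. r i \<ge> 0" and "i0 < l" "m i0 > 0"
    and modulus: "(cmod c)\<^sup>2 = (\<Prod>i<l. r i ^ m i)"
  shows "\<exists>z. (\<forall>i<l. z i * cnj (z i) = r i) \<and> (\<Prod>i<l. z i ^ m i) = c"
proof -
  define u where "u = cis (Arg c / m i0)"
  define z where "z = (\<lambda>i. sqrt (r i) * (if i = i0 then u else 1))"
  have "z i * cnj (z i) = r i" if "i < l" for i
  proof -
    have "u * cnj u = 1" by (simp add: u_def cis_cnj cis_mult)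
    then have "z i * cnj (z i) = complex_of_real (sqrt (r i) * sqrt (r i))"
      by (simp add: z_def ac_simps flip: of_real_mult)
    then show ?thesis using r that by simp
  qed
  moreover have "(\<Prod>i<l. z i ^ m i) = c"
  proof -
    have "(\<Prod>i<l. sqrt (r i) ^ m i)\<^sup>2 = (\<Prod>i<l. r i ^ m i)"
      unfolding prod_power_distrib
    proof (rule prod.cong)
      fix i assume "i \<in> {..<l}"
      then have "sqrt (r i) ^ 2 = r i" using r by simp
      then show "(sqrt (r i) ^ m i)\<^sup>2 = r i ^ m i" by (metis power_mult mult.commute)
    qed simp
    moreover have "(\<Prod>i<l. sqrt (r i) ^ m i) \<ge> 0" using r by (intro prod_nonneg) simp
    ultimately have norm: "(\<Prod>i<l. sqrt (r i) ^ m i) = cmod c"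
      using modulus power2_eq_iff_nonneg[of _ "cmod c"] by simp
    have "(\<Prod>i<l. z i ^ m i) = (\<Prod>i<l. sqrt (r i) ^ m i) * (\<Prod>i<l. (if i = i0 then u else 1) ^ m i)"
      by (simp add: z_def power_mult_distrib prod.distrib)
    also have "(\<Prod>i<l. (if i = i0 then u else 1) ^ m i) = u ^ m i0"
      using \<open>i0 < l\<close> by (simp add: if_distrib[of "\<lambda>x. x ^ _"] cong: if_cong)
    also have "u ^ m i0 = cis (Arg c)" using \<open>m i0 > 0\<close> by (simp add: u_def DeMoivre)
    finally show ?thesis using norm rcis_cmod_Arg[of c] by (simp add: rcis_def)
  qed
  ultimately show ?thesis by blast
qed

lemma alpha_pos: "\<forall>i<l. a i > 0 \<Longrightarrow> alpha l a > 0"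
  unfolding alpha_def by (metis Lcm_0_iff finite_imageI finite_lessThan gr0I imageE lessThan_iff)

lemma mexp_pos:
  assumes "i < l" "\<forall>i<l. a i > 0" "n i > 0"
  shows "mexp l a n i > 0"
proof -
  have "a i dvd alpha l a" using assms(1) by (simp add: alpha_def)
  then obtain t where t: "alpha l a = a i * t" by (elim dvdE)
  then have "t > 0" using alpha_pos[OF assms(2)] by (simp add: gr0I)
  moreover have "mexp l a n i = n i * t"
    using t assms(1,2) by (simp add: mexp_def mult.left_commute[of "n i"])
  ultimately show ?thesis using assms(3) by simp
qed

lemma sum_lessThan_add:
  fixes l k :: nat
  shows "(\<Sum>j<l + k. f j) = (\<Sum>j<l. f j) + (\<Sum>j<k. f (l + j))"
  by (induction k) (simp_all add: add.assoc)

lemma mem_shell_typeI_iff: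
  "z \<in> shell (typeI_matrix l a n) l k \<longleftrightarrow> in_VA l k z \<and>
     (\<forall>i<l. - of_nat (a i) * (z i * cnj (z i)) + of_nat (n i) * (\<Sum>j<k. z (l + j) * cnj (z (l + j))) = 0)"
proof -
  have "(\<Sum>j<l + k. of_int (typeI_matrix l a n i j) * (z j * cnj (z j)))
      = - of_nat (a i) * (z i * cnj (z i)) + of_nat (n i) * (\<Sum>j<k. z (l + j) * cnj (z (l + j)))"
    if "i < l" for i
  proof -
    have "(\<Sum>j<l. of_int (typeI_matrix l a n i j) * (z j * cnj (z j)))
        = (\<Sum>j<l. if j = i then - of_nat (a i) * (z i * cnj (z i)) else 0)"
      by (rule sum.cong) (auto simp: typeI_matrix_def)
    then show ?thesis using that
      by (simp add: sum_lessThan_add typeI_matrix_def sum_distrib_left)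
  qed
  then show ?thesis by (auto simp: shell_def)
qed

lemma inv_r_eq: "i < l \<Longrightarrow> complex_of_real (inv_r l z i) = z i * cnj (z i)"
  by (simp add: inv_r_def complex_mult_cnj)

lemma inv_p_eq: "g < k \<Longrightarrow> h < k \<Longrightarrow> inv_p l k z g h = z (l + g) * cnj (z (l + h))"
  by (simp add: inv_p_def)

lemma inv_q_eq:
  "s \<in> Sset l k a \<Longrightarrow>
     inv_q l k a n z s = monomial l z (mexp l a n) * monomial k (\<lambda>j. z (l + j)) s"
  by (simp add: inv_q_def monomial_def)

lemma hilbert_map_mem_image_desc:
  assumes z: "z \<in> shell (typeI_matrix l a n) l k"
  shows "hilbert_map l k a n z \<in> image_desc l k a n"
proof -
  let ?w = "\<lambda>j. z (l + j)" and ?C = "monomial l z (mexp l a n)"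
  let ?r = "inv_r l z" and ?p = "inv_p l k z" and ?q = "inv_q l k a n z"
  have rel6: "(\<Prod>i<l. complex_of_real (?r i) ^ mexp l a n i) * (\<Prod>j<N. ?p (gs j) (hs j))
      = ?q s * cnj (?q s')"
    if "s \<in> Sset l k a" "s' \<in> Sset l k a" "\<forall>j<N. gs j < k \<and> hs j < k"
      "\<forall>c<k. card {j. j < N \<and> gs j = c} = s c" "\<forall>c<k. card {j. j < N \<and> hs j = c} = s' c"
    for N :: nat and gs hs s s'
  proof -
    have "(\<Prod>i<l. complex_of_real (?r i) ^ mexp l a n i) = ?C * cnj ?C"
      by (simp add: inv_r_eq monomial_def power_mult_distrib prod.distrib)
    moreover have "(\<Prod>j<N. ?p (gs j) (hs j)) = monomial k ?w s * cnj (monomial k ?w s')"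
      using prod_gram_word[OF that(3-5)] that(3) by (simp add: inv_p_eq)
    ultimately show ?thesis using that(1,2) by (simp add: inv_q_eq)
  qed
  have moment: "- of_nat (a i) * complex_of_real (?r i) + of_nat (n i) * (\<Sum>j<k. ?p j j) = 0"
    if "i < l" for i
    using z that by (simp add: mem_shell_typeI_iff inv_r_eq inv_p_eq)
  have rel4: "?q s * ?q s' = ?q t * ?q t'"
    if "s \<in> Sset l k a" "s' \<in> Sset l k a" "t \<in> Sset l k a" "t' \<in> Sset l k a"
      "\<forall>m. s m + s' m = t m + t' m" for s s' t t'
  proof -
    have "(\<lambda>m. s m + s' m) = (\<lambda>m. t m + t' m)" using that(5) by blast
    then show ?thesis
      using that(1-4) monomial_add[of k ?w s s'] monomial_add[of k ?w t t']
      by (simp add: inv_q_eq ac_simps)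
  qed
  show ?thesis
    unfolding hilbert_map_def image_desc_def mem_Collect_eq prod.case
  proof (intro conjI allI impI ballI)
    show "?p g h * ?q s - ?p i h * ?q s' = 0"
      if "g < k" "h < k" "i < k" "s \<in> Sset l k a" "s' \<in> Sset l k a"
        "s' g = s g + 1 \<and> s' i + 1 = s i \<and> (\<forall>m. m \<noteq> g \<and> m \<noteq> i \<longrightarrow> s' m = s m)"
      for g h i s s'
      using monomial_exchange[of g k i s' s ?w] that by (simp add: inv_p_eq inv_q_eq algebra_simps)
    show "?p g h * cnj (?q s) - ?p g i * cnj (?q s') = 0"
      if "g < k" "h < k" "i < k" "s \<in> Sset l k a" "s' \<in> Sset l k a"
        "s' h = s h + 1 \<and> s' i + 1 = s i \<and> (\<forall>m. m \<noteq> h \<and> m \<noteq> i \<longrightarrow> s' m = s m)"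
      for g h i s s'
      using arg_cong[OF monomial_exchange[of h k i s' s ?w], of cnj] that
      by (simp add: inv_p_eq inv_q_eq algebra_simps)
    show "?q s * ?q s' - ?q t * ?q t' = 0"
      and "cnj (?q s) * cnj (?q s') - cnj (?q t) * cnj (?q t') = 0"
      if "s \<in> Sset l k a" "s' \<in> Sset l k a" "t \<in> Sset l k a" "t' \<in> Sset l k a"
        "\<forall>m. s m + s' m = t m + t' m" for s s' t t'
      using rel4[OF that] by (simp_all flip: complex_cnj_mult)
  qed (use rel6 moment in \<open>auto simp: inv_r_def inv_p_def inv_q_def\<close>)
qed

lemma hilbert_map_of_factorization:
  fixes u w :: "nat \<Rightarrow> complex" and l k :: nat
  defines "z \<equiv> \<lambda>j. if j < l then u j else if j < l + k then w (j - l) else 0"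
  assumes "\<forall>i<l. u i * cnj (u i) = r i" "\<forall>i\<ge>l. r i = 0"
    and "\<forall>i<k. \<forall>j<k. p i j = w i * cnj (w j)" "\<forall>i j. \<not> (i < k \<and> j < k) \<longrightarrow> p i j = 0"
    and "\<forall>s\<in>Sset l k a. q s = monomial l u (mexp l a n) * monomial k w s"
      "\<forall>s. s \<notin> Sset l k a \<longrightarrow> q s = 0"
  shows "hilbert_map l k a n z = (r, p, q)"
proof -
  have "inv_r l z = r" using assms by (auto simp: inv_r_def fun_eq_iff)
  moreover have "inv_p l k z = p" using assms by (auto simp: inv_p_def fun_eq_iff)
  moreover have "inv_q l k a n z = q" using assms by (auto simp: inv_q_def fun_eq_iff monomial_def)
  ultimately show ?thesis by (simp add: hilbert_map_def)
qed

lemma mem_hilbert_image_if_mem_image_desc: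
  assumes "1 \<le> l" "\<forall>i<l. a i > 0" "\<forall>i<l. n i > 0"
    and x: "(r, p, q) \<in> image_desc l k a n"
  shows "(r, p, q) \<in> hilbert_map l k a n ` shell (typeI_matrix l a n) l k"
proof -
  obtain r_out: "\<forall>i\<ge>l. r i = 0"
    and p_out: "\<forall>i j. \<not> (i < k \<and> j < k) \<longrightarrow> p i j = 0"
    and q_out: "\<forall>s. s \<notin> Sset l k a \<longrightarrow> q s = 0"
    and herm: "\<forall>i<k. \<forall>j<k. p i j = cnj (p j i)"
    and minors: "\<forall>g<k. \<forall>h<k. \<forall>i<k. \<forall>j<k. p g h * p i j - p g j * p i h = 0"
    and rel6: "\<forall>gs hs :: nat \<Rightarrow> nat. \<forall>s\<in>Sset l k a. \<forall>s'\<in>Sset l k a.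
        (\<forall>j<alpha l a. gs j < k \<and> hs j < k) \<and>
        (\<forall>c<k. card {j. j < alpha l a \<and> gs j = c} = s c) \<and>
        (\<forall>c<k. card {j. j < alpha l a \<and> hs j = c} = s' c) \<longrightarrow>
        (\<Prod>i<l. complex_of_real (r i) ^ mexp l a n i) * (\<Prod>j<alpha l a. p (gs j) (hs j))
          - q s * cnj (q s') = 0"
    and moment: "\<forall>i<l. - of_nat (a i) * complex_of_real (r i) + of_nat (n i) * (\<Sum>j<k. p j j) = 0"
    and r_nonneg: "\<forall>i<l. r i \<ge> 0"
    and diag: "\<forall>j<k. Im (p j j) = 0 \<and> Re (p j j) \<ge> 0"
    using x unfolding image_desc_def mem_Collect_eq prod.case by (elim conjE) (rule that)
  obtain w where pw: "\<forall>i<k. \<forall>j<k. p i j = w i * cnj (w j)"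
    using hermitian_rank_one_factor[OF herm minors diag] by blast
  define R where "R = (\<Prod>i<l. r i ^ mexp l a n i)"
  have "R * (monomial k w s * cnj (monomial k w s')) = q s * cnj (q s')"
    if "s \<in> Sset l k a" "s' \<in> Sset l k a" for s s'
    using that by (intro gram_monomial_eq_if_word_relation[OF pw]) (use rel6 in \<open>auto simp: Sset_def R_def\<close>)
  moreover have "R \<ge> 0" using r_nonneg by (auto simp: R_def intro!: prod_nonneg)
  ultimately obtain c where c: "c * cnj c = R" "\<forall>s\<in>Sset l k a. q s = c * monomial k w s"
    using exists_scalar_of_gram_eq[of "Sset l k a" R] by blast
  then have "(cmod c)\<^sup>2 = R" by (metis complex_norm_square of_real_eq_iff)
  then obtain u where u: "\<forall>i<l. u i * cnj (u i) = r i" "(\<Prod>i<l. u i ^ mexp l a n i) = c"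
    using exists_prescribed_moduli_prod_power[OF r_nonneg, of 0] mexp_pos[of 0 l a n] assms(1-3)
    by (auto simp: R_def)
  define z where "z = (\<lambda>j. if j < l then u j else if j < l + k then w (j - l) else 0)"
  have "z \<in> shell (typeI_matrix l a n) l k"
    using moment u(1) pw by (auto simp: mem_shell_typeI_iff in_VA_def z_def)
  moreover have "hilbert_map l k a n z = (r, p, q)"
    unfolding z_def using u r_out pw p_out c(2) q_out
    by (intro hilbert_map_of_factorization) (auto simp: monomial_def)
  ultimately show ?thesis by (metis image_eqI)
qed

theorem proposition4p4:
  fixes l k :: nat and a n :: "nat \<Rightarrow> nat"
  assumes "1 \<le> l" and "1 \<le> k"
    and "\<forall>i<l. a i > 0" and "\<forall>i<l. n i > 0"
    and "faithful (typeI_matrix l a n) l k"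
  shows "hilbert_map l k a n ` shell (typeI_matrix l a n) l k = image_desc l k a n"
proof
  show "hilbert_map l k a n ` shell (typeI_matrix l a n) l k \<subseteq> image_desc l k a n"
    using hilbert_map_mem_image_desc by blast
  show "image_desc l k a n \<subseteq> hilbert_map l k a n ` shell (typeI_matrix l a n) l k"
    using mem_hilbert_image_if_mem_image_desc[OF assms(1,3,4)] by auto
qed

end
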